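(* Let $p>1$, $p'=\frac{p}{p-1}$, $\Omega=\{x\in\mathbb{R}^2\;;\;|x|>1\}$, and let $\eta,\eta^*,\psi_R,\psi_R^*,P(R)$ be as in the context. Then there exist positive constants $C_1,C_2,C_3,C_4$ (independent of $R$ and of $(x,t)$) such that for every $R>0$: (i) $\psi_R(x,t)=1$ if $(x,t)\in P(R/2)$, and $\psi_R(x,t)=0$ if $(x,t)\notin P(R)$; (ii) $|\partial_t\psi_R(x,t)|\le C_1R^{-1}[\psi_R^*(x,t)]^{1/p}$ for all $(x,t)\in P(R)$; (iii) $|\partial_t^2\psi_R(x,t)|\le C_2R^{-2}[\psi_R^*(x,t)]^{1/p}$ for all $(x,t)\in P(R)$; (iv) $|\nabla\psi_R(x,t)|\le C_3R^{-1}|x|(\log|x|)[\psi_R^*(x,t)]^{1/p}$ for all $(x,t)\in P(R)$; (v) $|\Delta\psi_R(x,t)|\le C_4R^{-1}[\psi_R^*(x,t)]^{1/p}$ for all $(x,t)\in P(R)$.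
   Context: Fix $\eta\in C^2([0,\infty))$ with $\eta=1$ on $[0,1/2]$, $\eta$ decreasing on $(1/2,1)$, $\eta=0$ on $[1,\infty)$; let $\eta^*(s)=0$ for $s\in[0,1/2)$ and $\eta^*(s)=\eta(s)$ for $s\ge1/2$. For $R>0$ set $s_R(x,t)=\frac{(|x|-1)^2+t}{R}$, $\psi_R(x,t)=[\eta(s_R(x,t))]^{2p'}$, $\psi_R^*(x,t)=[\eta^*(s_R(x,t))]^{2p'}$ for $(x,t)\in\Omega\times[0,\infty)$, and $P(R)=\{(x,t)\in\Omega\times[0,\infty)\;;\;(|x|-1)^2+t\le R\}$. *)

theory Defs
  imports "HOL-Analysis.Analysis"
begin

definition pprime :: "real \<Rightarrow> real" where
  "pprime p = p / (p - 1)"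

definition C2_on_nonneg :: "(real \<Rightarrow> real) \<Rightarrow> bool" where
  "C2_on_nonneg f \<longleftrightarrow> (\<exists>f1 f2.
     (\<forall>s\<ge>0. (f has_real_derivative f1 s) (at s within {0..}) \<and>
              (f1 has_real_derivative f2 s) (at s within {0..})) \<and>
     continuous_on {0..} f2)"

definition cutoff :: "(real \<Rightarrow> real) \<Rightarrow> bool" where
  "cutoff eta \<longleftrightarrow> C2_on_nonneg eta \<and>
     (\<forall>s. 0 \<le> s \<and> s \<le> 1/2 \<longrightarrow> eta s = 1) \<and>
     (\<forall>a b. 1/2 < a \<and> a < b \<and> b < 1 \<longrightarrow> eta b \<le> eta a) \<and>
     (\<forall>s\<ge>1. eta s = 0)"

definition eta_star :: "(real \<Rightarrow> real) \<Rightarrow> real \<Rightarrow> real" where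
  "eta_star eta s = (if s < 1/2 then 0 else eta s)"

definition sR :: "real \<Rightarrow> real^2 \<Rightarrow> real \<Rightarrow> real" where
  "sR R x t = ((norm x - 1)\<^sup>2 + t) / R"

definition psiR :: "real \<Rightarrow> (real \<Rightarrow> real) \<Rightarrow> real \<Rightarrow> real^2 \<Rightarrow> real \<Rightarrow> real" where
  "psiR p eta R x t = (eta (sR R x t)) powr (2 * pprime p)"

definition psiR_star :: "real \<Rightarrow> (real \<Rightarrow> real) \<Rightarrow> real \<Rightarrow> real^2 \<Rightarrow> real \<Rightarrow> real" where
  "psiR_star p eta R x t = (eta_star eta (sR R x t)) powr (2 * pprime p)"

definition Omega :: "(real^2) set" where
  "Omega = {x. norm x > 1}"

definition PR :: "real \<Rightarrow> ((real^2) \<times> real) set" where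
  "PR R = {(x, t). x \<in> Omega \<and> t \<ge> 0 \<and> (norm x - 1)\<^sup>2 + t \<le> R}"

definition partial_x :: "2 \<Rightarrow> (real^2 \<Rightarrow> real) \<Rightarrow> real^2 \<Rightarrow> real" where
  "partial_x i f x = deriv (\<lambda>h. f (x + h *\<^sub>R axis i 1)) 0"

definition grad :: "(real^2 \<Rightarrow> real) \<Rightarrow> real^2 \<Rightarrow> real^2" where
  "grad f x = (\<chi> i. partial_x i f x)"

definition laplacian :: "(real^2 \<Rightarrow> real) \<Rightarrow> real^2 \<Rightarrow> real" where
  "laplacian f x = (\<Sum>i\<in>UNIV. partial_x i (partial_x i f) x)"

end

theory Submission
  imports Defs
begin

text \<open>Put \<open>a = 2p'\<close> and \<open>s = s_R(x,t)\<close>, so that \<open>\<psi>_R = \<eta>(s)^a\<close> and, because \<open>a/p = a - 2\<close>,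
  \<open>(\<psi>_R\<^sup>*)^(1/p) = \<eta>\<^sup>*(s)^(a-2)\<close>. The first two derivatives of \<open>\<eta>^a\<close> are combinations of
  \<open>\<eta>^(a-1) \<eta>'\<close>, \<open>\<eta>^(a-2) \<eta>'^2\<close> and \<open>\<eta>^(a-1) \<eta>''\<close>; since \<open>0 \<le> \<eta> \<le> 1\<close> they are bounded by
  a constant times \<open>\<eta>^(a-2)\<close>, and they vanish where \<open>s < 1/2\<close>, which is exactly where \<open>\<eta>\<^sup>*\<close>
  differs from \<open>\<eta>\<close>. The chain rule contributes \<open>\<partial>s/\<partial>t = 1/R\<close> and \<open>\<partial>s/\<partial>r = 2(r - 1)/R\<close> for
  \<open>r = |x|\<close>; on \<open>P(R)\<close> the latter is controlled by \<open>(r - 1)^2 \<le> R\<close> and by \<open>r - 1 \<le> r log r\<close>, and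
  the Laplacian is computed from the planar radial formula \<open>g'' + g'/r\<close>.\<close>

lemma DERIV_powr_of_nonneg:
  fixes f :: "real \<Rightarrow> real"
  assumes f: "(f has_real_derivative D) (at s)"
    and nonneg: "\<forall>\<^sub>F u in nhds s. 0 \<le> f u" and c: "c > 1"
  shows "((\<lambda>u. f u powr c) has_real_derivative c * f s powr (c - 1) * D) (at s)"
proof (cases "f s > 0")
  case True
  then show ?thesis using DERIV_fun_powr[OF f True, of c] by simp
next
  case False
  txt \<open>Here the difference quotient tends to \<open>D \<cdot> 0\<close>, whatever \<open>D\<close> is, since \<open>c > 1\<close>.\<close>
  then have f0: "f s = 0" using eventually_nhds_x_imp_x[OF nonneg] by simp
  have quotient: "((\<lambda>h. (f (s + h) - f s) / h) \<longlongrightarrow> D) (at 0)"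
    using f by (simp add: DERIV_def)
  have "((\<lambda>h. f (s + h)) \<longlongrightarrow> 0) (at 0)"
    using DERIV_isCont[OF f] f0 by (metis LIM_offset_zero isCont_def)
  moreover have ev: "\<forall>\<^sub>F h in at 0. 0 \<le> f (s + h)"
  proof -
    have "\<forall>\<^sub>F u in at s. 0 \<le> f u"
      using nonneg unfolding eventually_at_filter by (rule eventually_mono) simp
    then show ?thesis unfolding eventually_at_to_0[of _ s] by (simp add: add.commute)
  qed
  ultimately have "((\<lambda>h. f (s + h) powr (c - 1)) \<longlongrightarrow> 0) (at 0)"
    using c by (intro tendsto_zero_powrI) auto
  from tendsto_mult[OF quotient this]
  have "((\<lambda>h. (f (s + h) - f s) / h * f (s + h) powr (c - 1)) \<longlongrightarrow> 0) (at 0)"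
    by simp
  moreover have "\<forall>\<^sub>F h in at 0. (f (s + h) - f s) / h * f (s + h) powr (c - 1)
      = (f (s + h) powr c - f s powr c) / h"
    using ev
  proof eventually_elim
    case (elim h)
    have "f (s + h) powr c = f (s + h) powr (1 + (c - 1))" by simp
    also have "\<dots> = f (s + h) powr 1 * f (s + h) powr (c - 1)" by (rule powr_add)
    finally show ?case using f0 elim by (cases "f (s + h) = 0") simp_all
  qed
  ultimately have "((\<lambda>h. (f (s + h) powr c - f s powr c) / h) \<longlongrightarrow> 0) (at 0)"
    by (rule Lim_transform_eventually)
  then show ?thesis using f0 by (simp add: DERIV_def)
qed

lemma DERIV_norm_along_axis:
  fixes y :: "real^'n"
  assumes "y \<noteq> 0"
  shows "((\<lambda>h. norm (y + h *\<^sub>R axis i 1)) has_real_derivative y $ i / norm y) (at 0)"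
proof -
  have line: "((\<lambda>h. y + h *\<^sub>R axis i 1) has_derivative (\<lambda>h. h *\<^sub>R axis i 1)) (at 0)"
    by (auto intro!: derivative_eq_intros)
  have "((\<lambda>x. norm x) has_derivative (\<lambda>h. h \<bullet> sgn y)) (at (y + 0 *\<^sub>R axis i 1))"
    using has_derivative_norm[OF assms] by simp
  from has_derivative_compose[OF line this]
  have "((\<lambda>h. norm (y + h *\<^sub>R axis i 1)) has_derivative (\<lambda>h. (h *\<^sub>R axis i 1) \<bullet> sgn y)) (at 0)"
    by simp
  moreover have "(\<lambda>h::real. (h *\<^sub>R axis i 1) \<bullet> sgn y) = (*) (y $ i / norm y)"
    by (auto simp: inner_axis' sgn_div_norm divide_inverse)
  ultimately show ?thesis unfolding has_field_derivative_def by simp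
qed

lemma diff_one_le_mult_ln:
  fixes r :: real
  assumes "r > 0"
  shows "r - 1 \<le> r * ln r"
proof -
  have "ln (inverse r) \<le> inverse r - 1" using assms by (intro ln_le_minus_one) simp
  then have "r * (- ln r) \<le> r * (inverse r - 1)"
    using assms by (intro mult_left_mono) (auto simp: ln_inverse)
  then show ?thesis using assms by (simp add: algebra_simps)
qed

lemma DERIV_comp_radial_arg:
  assumes "R \<noteq> 0" and "(h has_real_derivative D) (at (((\<rho> - 1)\<^sup>2 + t) / R))"
  shows "((\<lambda>\<rho>. h (((\<rho> - 1)\<^sup>2 + t) / R)) has_real_derivative D * (2 * (\<rho> - 1) / R)) (at \<rho>)"
proof -
  have "((\<lambda>\<rho>. ((\<rho> - 1)\<^sup>2 + t) / R) has_real_derivative 2 * (\<rho> - 1) / R) (at \<rho>)"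
    using assms(1) by (auto intro!: derivative_eq_intros simp: power2_eq_square field_simps)
  from DERIV_chain2[OF assms(2) this] show ?thesis .
qed

lemma continuous_on_compact_abs_bound:
  fixes f :: "real \<Rightarrow> real"
  assumes "continuous_on S f" "compact S"
  obtains M where "\<And>s. s \<in> S \<Longrightarrow> \<bar>f s\<bar> \<le> M"
  using compact_imp_bounded[OF compact_continuous_image[OF assms]] that
  unfolding bounded_iff by (metis image_eqI real_norm_def)

lemma deriv2_comp_affine:
  fixes h h' h'' :: "real \<Rightarrow> real"
  assumes R: "R > 0" and qt: "q + t > 0"
    and h: "\<And>u. u > 0 \<Longrightarrow> (h has_real_derivative h' u) (at u)"
    and h': "\<And>u. u > 0 \<Longrightarrow> (h' has_real_derivative h'' u) (at u)"
  shows "deriv (\<lambda>s. h ((q + s) / R)) t = h' ((q + t) / R) / R"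
    and "deriv (deriv (\<lambda>s. h ((q + s) / R))) t = h'' ((q + t) / R) / R\<^sup>2"
proof -
  have comp: "((\<lambda>s. k ((q + s) / R)) has_real_derivative k' ((q + s) / R) / R) (at s)"
    if k: "\<And>u. u > 0 \<Longrightarrow> (k has_real_derivative k' u) (at u)" and s: "q + s > 0" for k k' s
  proof -
    have "((\<lambda>s. (q + s) / R) has_real_derivative 1 / R) (at s)"
      using R by (auto intro!: derivative_eq_intros)
    from DERIV_chain2[OF k this] show ?thesis using R s by simp
  qed
  have deriv_eq: "deriv (\<lambda>s. h ((q + s) / R)) s = h' ((q + s) / R) / R" if "q + s > 0" for s
    using DERIV_imp_deriv[OF comp[OF h that]] .
  then show "deriv (\<lambda>s. h ((q + s) / R)) t = h' ((q + t) / R) / R"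
    using qt .
  have "((\<lambda>s. h' ((q + s) / R) / R) has_real_derivative h'' ((q + t) / R) / R / R) (at t)"
    using comp[OF h' qt] by (rule DERIV_cdivide)
  then have "(deriv (\<lambda>s. h ((q + s) / R)) has_real_derivative h'' ((q + t) / R) / R / R) (at t)"
    by (rule has_field_derivative_transform_within_open[of _ _ _ "{-q<..}"])
       (use qt deriv_eq in auto)
  from DERIV_imp_deriv[OF this]
  show "deriv (deriv (\<lambda>s. h ((q + s) / R))) t = h'' ((q + t) / R) / R\<^sup>2"
    by (simp add: power2_eq_square)
qed

section \<open>Radial functions on the plane\<close>

lemma partial_x_radial:
  assumes g: "(g has_real_derivative g' (norm x)) (at (norm x))" and "x \<noteq> 0"
  shows "partial_x i (\<lambda>y. g (norm y)) x = g' (norm x) * (x $ i / norm x)"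
proof -
  have "(g has_real_derivative g' (norm x)) (at (norm (x + 0 *\<^sub>R axis i 1)))"
    using g by simp
  from DERIV_chain2[OF this DERIV_norm_along_axis[OF \<open>x \<noteq> 0\<close>]]
  show ?thesis unfolding partial_x_def by (intro DERIV_imp_deriv) simp
qed

lemma norm_grad_radial:
  assumes "(g has_real_derivative g' (norm x)) (at (norm x))" and "x \<noteq> 0"
  shows "norm (grad (\<lambda>y. g (norm y)) x) = \<bar>g' (norm x)\<bar>"
proof -
  have "grad (\<lambda>y. g (norm y)) x = (g' (norm x) / norm x) *\<^sub>R x"
    unfolding grad_def using partial_x_radial[where g = g and g' = g' and x = x, OF assms]
    by (simp add: vec_eq_iff)
  then show ?thesis using \<open>x \<noteq> 0\<close> by simp
qed

lemma laplacian_radial: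
  assumes S: "open S" "norm x \<in> S" "S \<subseteq> {0<..}"
    and g: "\<And>r. r \<in> S \<Longrightarrow> (g has_real_derivative g' r) (at r)"
    and g': "(g' has_real_derivative g'' (norm x)) (at (norm x))"
  shows "laplacian (\<lambda>y. g (norm y)) x = g'' (norm x) + g' (norm x) / norm x"
proof -
  let ?r = "norm x"
  have r0: "?r > 0" and x0: "x \<noteq> 0" using S by auto
  have second_partial: "partial_x i (partial_x i (\<lambda>y. g (norm y))) x
      = g'' ?r * (x $ i / ?r) * (x $ i / ?r) + g' ?r * ((?r - x $ i * (x $ i / ?r)) / (?r * ?r))"
    for i
  proof -
    let ?T = "{h. norm (x + h *\<^sub>R axis i 1) \<in> S}"
    have "open ?T"
      using continuous_open_vimage[OF \<open>open S\<close>, of "\<lambda>h. norm (x + h *\<^sub>R axis i 1)"]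
      by (auto simp: vimage_def intro!: continuous_intros)
    have first_partial: "g' (norm (x + h *\<^sub>R axis i 1)) * ((x $ i + h) / norm (x + h *\<^sub>R axis i 1))
        = partial_x i (\<lambda>y. g (norm y)) (x + h *\<^sub>R axis i 1)" if "h \<in> ?T" for h
      using partial_x_radial[where g = g and g' = g', OF g, of "x + h *\<^sub>R axis i 1" i] that S by auto
    have "(g' has_real_derivative g'' ?r) (at (norm (x + 0 *\<^sub>R axis i 1)))"
      using g' by simp
    note chain = DERIV_chain2[OF this DERIV_norm_along_axis[OF x0, of i]]
    have "((\<lambda>h. x $ i + h) has_real_derivative 1) (at 0)"
      by (auto intro!: derivative_eq_intros)
    from DERIV_divide[OF this DERIV_norm_along_axis[OF x0, of i]]
    have quotient: "((\<lambda>h. (x $ i + h) / norm (x + h *\<^sub>R axis i 1)) has_real_derivative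
        (?r - x $ i * (x $ i / ?r)) / (?r * ?r)) (at 0)"
      using x0 by simp
    from DERIV_mult[OF chain quotient]
    have "((\<lambda>h. g' (norm (x + h *\<^sub>R axis i 1)) * ((x $ i + h) / norm (x + h *\<^sub>R axis i 1)))
        has_real_derivative g'' ?r * (x $ i / ?r) * (x $ i / ?r)
          + g' ?r * ((?r - x $ i * (x $ i / ?r)) / (?r * ?r))) (at 0)"
      by (rule DERIV_cong) simp
    then have "((\<lambda>h. partial_x i (\<lambda>y. g (norm y)) (x + h *\<^sub>R axis i 1)) has_real_derivative
        g'' ?r * (x $ i / ?r) * (x $ i / ?r) + g' ?r * ((?r - x $ i * (x $ i / ?r)) / (?r * ?r))) (at 0)"
      by (rule has_field_derivative_transform_within_open[OF _ \<open>open ?T\<close> _ first_partial])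
         (use S in simp_all)
    then show ?thesis unfolding partial_x_def[of i "partial_x i _"] by (rule DERIV_imp_deriv)
  qed
  have sum_sq: "(\<Sum>i\<in>UNIV. x $ i * x $ i) = ?r * ?r"
    using dot_square_norm[of x] by (simp add: inner_vec_def power2_eq_square)
  have "laplacian (\<lambda>y. g (norm y)) x = (\<Sum>i\<in>UNIV. g'' ?r / (?r * ?r) * (x $ i * x $ i)
      + (g' ?r / ?r - g' ?r / (?r * ?r * ?r) * (x $ i * x $ i)))"
    unfolding laplacian_def second_partial using r0 by (intro sum.cong refl) (simp add: field_simps)
  also have "\<dots> = g'' ?r / (?r * ?r) * (\<Sum>i\<in>UNIV. x $ i * x $ i)
      + 2 * (g' ?r / ?r) - g' ?r / (?r * ?r * ?r) * (\<Sum>i\<in>UNIV. x $ i * x $ i)"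
    by (simp add: sum.distrib sum_subtractf sum_distrib_left)
  also have "\<dots> = g'' ?r + g' ?r / ?r"
    unfolding sum_sq using r0 by (simp add: field_simps)
  finally show ?thesis .
qed

section \<open>Cutoff profiles\<close>

lemma cutoff_derivs:
  assumes "cutoff eta"
  obtains f1 f2 where "\<And>s. s > 0 \<Longrightarrow> (eta has_real_derivative f1 s) (at s)"
    and "\<And>s. s > 0 \<Longrightarrow> (f1 has_real_derivative f2 s) (at s)"
    and "continuous_on {0..1} f1" and "continuous_on {0..1} f2"
proof -
  obtain f1 f2 where D: "\<And>s. s \<ge> 0 \<Longrightarrow> (eta has_real_derivative f1 s) (at s within {0..}) \<and>
      (f1 has_real_derivative f2 s) (at s within {0..})" and "continuous_on {0..} f2"
    using assms unfolding cutoff_def C2_on_nonneg_def by blast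
  have "(eta has_real_derivative f1 s) (at s) \<and> (f1 has_real_derivative f2 s) (at s)"
    if "s > 0" for s
    using D[of s] that at_within_interior[of s "{0..}"] by simp
  moreover have "continuous_on {0..1} f1"
    unfolding continuous_on_eq_continuous_within
    using D by (metis DERIV_continuous atLeastAtMost_iff atLeast_iff continuous_within_subset
        subsetI)
  ultimately show thesis
    using continuous_on_subset[OF \<open>continuous_on {0..} f2\<close>, of "{0..1}"] by (intro that[of f1 f2]) auto
qed

lemma cutoff_isCont: "cutoff eta \<Longrightarrow> s > 0 \<Longrightarrow> isCont eta s"
  by (metis cutoff_derivs DERIV_isCont)

lemma cutoff_nonneg:
  assumes "cutoff eta" "s > 0"
  shows "0 \<le> eta s"
proof -
  consider "s \<le> 1/2" | "s \<ge> 1" | "1/2 < s" "s < 1" by linarith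
  then show ?thesis
  proof cases
    case 3
    have "(eta \<longlongrightarrow> eta 1) (at_left 1)"
      using cutoff_isCont[OF assms(1), of 1] by (simp add: isCont_def filterlim_at_split)
    moreover have "\<forall>\<^sub>F b in at_left 1. eta b \<le> eta s"
      unfolding eventually_at_left_field using 3 assms(1)
      by (intro exI[of _ s]) (auto simp: cutoff_def)
    ultimately have "eta 1 \<le> eta s"
      by (intro tendsto_upperbound) (auto simp: trivial_limit_at_left_real)
    then show ?thesis using assms(1) by (simp add: cutoff_def)
  qed (use assms in \<open>auto simp: cutoff_def\<close>)
qed

lemma cutoff_le_one:
  assumes "cutoff eta" "s > 0"
  shows "eta s \<le> 1"
proof -
  consider "s \<le> 1/2" | "s \<ge> 1" | "1/2 < s" "s < 1" by linarith
  then show ?thesis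
  proof cases
    case 3
    have "(eta \<longlongrightarrow> eta (1/2)) (at_right (1/2))"
      using cutoff_isCont[OF assms(1), of "1/2"] by (simp add: isCont_def filterlim_at_split)
    moreover have "\<forall>\<^sub>F b in at_right (1/2). eta s \<le> eta b"
      unfolding eventually_at_right_field using 3 assms(1)
      by (intro exI[of _ s]) (auto simp: cutoff_def)
    ultimately have "eta s \<le> eta (1/2)"
      by (intro tendsto_lowerbound) (auto simp: trivial_limit_at_right_real)
    then show ?thesis using assms(1) by (simp add: cutoff_def)
  qed (use assms in \<open>auto simp: cutoff_def\<close>)
qed

lemma two_pprime_gt_two: "p > 1 \<Longrightarrow> 2 * pprime p > 2"
  by (simp add: pprime_def field_simps)

lemma psiR_star_powr_inverse:
  assumes "p > 1"
  shows "psiR_star p eta R x t powr (1 / p) = eta_star eta (sR R x t) powr (2 * pprime p - 2)"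
proof -
  have "2 * pprime p * (1 / p) = 2 * pprime p - 2"
    using assms by (simp add: pprime_def field_simps)
  then show ?thesis by (simp add: psiR_star_def powr_powr)
qed

lemma sR_pos_le_one:
  assumes "R > 0" and "(x, t) \<in> PR R"
  shows "0 < sR R x t" and "sR R x t \<le> 1"
  using assms by (auto simp: PR_def Omega_def sR_def add_pos_nonneg)

lemma psiR_eq_one:
  assumes "cutoff eta" "R > 0" "(x, t) \<in> PR (R / 2)"
  shows "psiR p eta R x t = 1"
proof -
  have "0 \<le> sR R x t" "sR R x t \<le> 1/2"
    using assms(2,3) by (auto simp: PR_def sR_def field_simps)
  then show ?thesis using assms(1) by (simp add: psiR_def cutoff_def)
qed

lemma psiR_eq_zero:
  assumes "cutoff eta" "R > 0" "x \<in> Omega" "t \<ge> 0" "(x, t) \<notin> PR R"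
  shows "psiR p eta R x t = 0"
proof -
  have "sR R x t \<ge> 1" using assms(2-5) by (auto simp: PR_def sR_def field_simps)
  then show ?thesis using assms(1) by (simp add: psiR_def cutoff_def)
qed

section \<open>Derivatives of powers of a cutoff profile\<close>

locale cutoff_profile =
  fixes eta f1 f2 :: "real \<Rightarrow> real" and M1 M2 :: real
  assumes eta_deriv: "\<And>s. s > 0 \<Longrightarrow> (eta has_real_derivative f1 s) (at s)"
    and f1_deriv: "\<And>s. s > 0 \<Longrightarrow> (f1 has_real_derivative f2 s) (at s)"
    and eta_nonneg: "\<And>s. s > 0 \<Longrightarrow> 0 \<le> eta s"
    and eta_le_one: "\<And>s. s > 0 \<Longrightarrow> eta s \<le> 1"
    and eta_flat: "\<And>s. 0 < s \<Longrightarrow> s \<le> 1/2 \<Longrightarrow> eta s = 1"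
    and f1_bound: "\<And>s. 0 < s \<Longrightarrow> s \<le> 1 \<Longrightarrow> \<bar>f1 s\<bar> \<le> M1"
    and f2_bound: "\<And>s. 0 < s \<Longrightarrow> s \<le> 1 \<Longrightarrow> \<bar>f2 s\<bar> \<le> M2"

lemma cutoff_imp_cutoff_profile:
  assumes "cutoff eta"
  obtains f1 f2 M1 M2 where "cutoff_profile eta f1 f2 M1 M2"
proof -
  obtain f1 f2 where d1: "\<And>s. s > 0 \<Longrightarrow> (eta has_real_derivative f1 s) (at s)"
    and d2: "\<And>s. s > 0 \<Longrightarrow> (f1 has_real_derivative f2 s) (at s)"
    and c1: "continuous_on {0..1} f1" and c2: "continuous_on {0..1} f2"
    using cutoff_derivs[OF assms] by blast
  obtain M1 where "\<And>s. s \<in> {0..1} \<Longrightarrow> \<bar>f1 s\<bar> \<le> M1"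
    using continuous_on_compact_abs_bound[OF c1 compact_Icc] by blast
  moreover obtain M2 where "\<And>s. s \<in> {0..1} \<Longrightarrow> \<bar>f2 s\<bar> \<le> M2"
    using continuous_on_compact_abs_bound[OF c2 compact_Icc] by blast
  ultimately have "cutoff_profile eta f1 f2 M1 M2"
    using d1 d2 cutoff_nonneg[OF assms] cutoff_le_one[OF assms] assms
    by unfold_locales (auto simp: cutoff_def)
  then show thesis by (rule that)
qed

context cutoff_profile
begin

definition eta_powr_deriv :: "real \<Rightarrow> real \<Rightarrow> real" where
  "eta_powr_deriv a s = a * eta s powr (a - 1) * f1 s"

definition eta_powr_deriv2 :: "real \<Rightarrow> real \<Rightarrow> real" where
  "eta_powr_deriv2 a s = a * ((a - 1) * eta s powr (a - 2) * f1 s * f1 s + eta s powr (a - 1) * f2 s)"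

definition eta_powr_deriv_bound :: "real \<Rightarrow> real" where
  "eta_powr_deriv_bound a = a * \<bar>M1\<bar> + 1"

definition eta_powr_deriv2_bound :: "real \<Rightarrow> real" where
  "eta_powr_deriv2_bound a = a * (a - 1) * M1\<^sup>2 + a * \<bar>M2\<bar> + 1"

lemma eta_powr_deriv_bounds_pos:
  "a > 1 \<Longrightarrow> eta_powr_deriv_bound a > 0 \<and> eta_powr_deriv2_bound a > 0"
  unfolding eta_powr_deriv_bound_def eta_powr_deriv2_bound_def by (simp add: add_nonneg_pos)

lemma DERIV_eta_powr:
  assumes a: "a > 1" and s: "s > 0"
  shows "((\<lambda>u. eta u powr a) has_real_derivative eta_powr_deriv a s) (at s)"
proof -
  have "\<forall>\<^sub>F u in nhds s. 0 \<le> eta u"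
    using eventually_nhds_in_open[of "{0<..}" s] s by (auto elim!: eventually_mono intro: eta_nonneg)
  from DERIV_powr_of_nonneg[OF eta_deriv[OF s] this a] show ?thesis
    by (simp add: eta_powr_deriv_def)
qed

lemma DERIV_eta_powr_deriv:
  assumes a: "a > 2" and s: "s > 0"
  shows "((\<lambda>u. eta_powr_deriv a u) has_real_derivative eta_powr_deriv2 a s) (at s)"
proof -
  have "a - 1 > 1" using a by simp
  note D = DERIV_cmult[OF DERIV_mult[OF DERIV_eta_powr[OF this s] f1_deriv[OF s]], of a]
  show ?thesis unfolding eta_powr_deriv_def[of a] mult.assoc
    by (rule DERIV_cong[OF D]) (simp add: eta_powr_deriv_def eta_powr_deriv2_def algebra_simps)
qed

lemma derivs_vanish_flat:
  assumes "0 < s" "s < 1/2"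
  shows "f1 s = 0" and "f2 s = 0"
proof -
  have f1_0: "f1 u = 0" if "0 < u" "u < 1/2" for u
  proof -
    have "((\<lambda>_. 1) has_real_derivative 0) (at u)" by simp
    then have "(eta has_real_derivative 0) (at u)"
      by (rule has_field_derivative_transform_within_open[of _ _ _ "{0<..<1/2}"])
         (use that eta_flat in auto)
    then show ?thesis using DERIV_unique eta_deriv that by blast
  qed
  then show "f1 s = 0" using assms .
  have "((\<lambda>_. 0) has_real_derivative 0) (at s)" by simp
  then have "(f1 has_real_derivative 0) (at s)"
    by (rule has_field_derivative_transform_within_open[of _ _ _ "{0<..<1/2}"])
       (use assms f1_0 in auto)
  then show "f2 s = 0" using DERIV_unique f1_deriv assms by blast
qed

text \<open>On the flat part the derivatives vanish, so \<open>eta\<close> may be replaced by \<open>eta_star\<close>;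
  elsewhere \<open>eta \<le> 1\<close> lets the exponents \<open>a - 1\<close> be lowered to \<open>a - 2\<close>.\<close>

lemma abs_eta_powr_deriv_le:
  assumes a: "a > 2" and s: "0 < s" "s \<le> 1"
  shows "\<bar>eta_powr_deriv a s\<bar> \<le> eta_powr_deriv_bound a * eta_star eta s powr (a - 2)"
proof (cases "s < 1/2")
  case True
  then show ?thesis using derivs_vanish_flat s by (simp add: eta_powr_deriv_def eta_star_def)
next
  case False
  let ?e = "eta s"
  have "?e powr (a - 1) \<le> ?e powr (a - 2)"
    using eta_nonneg eta_le_one s by (intro powr_mono') auto
  then have "\<bar>eta_powr_deriv a s\<bar> \<le> a * ?e powr (a - 2) * \<bar>M1\<bar>"
    using a f1_bound[OF s] unfolding eta_powr_deriv_def abs_mult by (intro mult_mono) auto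
  also have "\<dots> \<le> eta_powr_deriv_bound a * ?e powr (a - 2)"
    by (simp add: eta_powr_deriv_bound_def algebra_simps)
  finally show ?thesis using False by (simp add: eta_star_def)
qed

lemma abs_eta_powr_deriv2_le:
  assumes a: "a > 2" and s: "0 < s" "s \<le> 1"
  shows "\<bar>eta_powr_deriv2 a s\<bar> \<le> eta_powr_deriv2_bound a * eta_star eta s powr (a - 2)"
proof (cases "s < 1/2")
  case True
  then show ?thesis using derivs_vanish_flat s by (simp add: eta_powr_deriv2_def eta_star_def)
next
  case False
  let ?e = "eta s"
  have pow: "?e powr (a - 1) \<le> ?e powr (a - 2)"
    using eta_nonneg eta_le_one s by (intro powr_mono') auto
  have sq: "\<bar>f1 s * f1 s\<bar> \<le> M1\<^sup>2"
    using f1_bound[OF s] by (metis abs_ge_zero abs_mult mult_mono' power2_eq_square power2_abs)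
  let ?X = "(a - 1) * ?e powr (a - 2) * f1 s * f1 s" and ?Y = "?e powr (a - 1) * f2 s"
  have "\<bar>eta_powr_deriv2 a s\<bar> = a * \<bar>?X + ?Y\<bar>"
    using a by (simp add: eta_powr_deriv2_def abs_mult)
  also have "\<dots> \<le> a * ((a - 1) * ?e powr (a - 2) * \<bar>f1 s * f1 s\<bar> + ?e powr (a - 1) * \<bar>f2 s\<bar>)"
    using a abs_triangle_ineq[of ?X ?Y] by (intro mult_left_mono) (auto simp: abs_mult)
  also have "\<dots> \<le> a * ((a - 1) * ?e powr (a - 2) * M1\<^sup>2 + ?e powr (a - 2) * \<bar>M2\<bar>)"
    using a pow sq f2_bound[OF s] by (intro mult_left_mono add_mono mult_mono) auto
  also have "\<dots> \<le> eta_powr_deriv2_bound a * ?e powr (a - 2)"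
    by (simp add: eta_powr_deriv2_bound_def algebra_simps)
  finally show ?thesis using False by (simp add: eta_star_def)
qed

lemma deriv_t_eta_sR_powr:
  assumes a: "a > 2" and R: "R > 0" and x: "norm x > 1" and t: "t \<ge> 0"
  shows "deriv (\<lambda>s. eta (sR R x s) powr a) t = eta_powr_deriv a (sR R x t) / R"
    and "deriv (deriv (\<lambda>s. eta (sR R x s) powr a)) t = eta_powr_deriv2 a (sR R x t) / R\<^sup>2"
proof -
  have qt: "(norm x - 1)\<^sup>2 + t > 0" using x t by (simp add: add_pos_nonneg)
  note affine = deriv2_comp_affine[where h = "\<lambda>u. eta u powr a", OF R qt
      DERIV_eta_powr DERIV_eta_powr_deriv]
  show "deriv (\<lambda>s. eta (sR R x s) powr a) t = eta_powr_deriv a (sR R x t) / R"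
    and "deriv (deriv (\<lambda>s. eta (sR R x s) powr a)) t = eta_powr_deriv2 a (sR R x t) / R\<^sup>2"
    using affine a unfolding sR_def by simp_all
qed

lemma DERIV_radial_eta_powr:
  assumes a: "a > 2" and R: "R > 0" and t: "t \<ge> 0" and \<rho>: "\<rho> > 1"
  defines "s \<equiv> ((\<rho> - 1)\<^sup>2 + t) / R"
  shows "((\<lambda>\<rho>. eta (((\<rho> - 1)\<^sup>2 + t) / R) powr a) has_real_derivative
      eta_powr_deriv a s * (2 * (\<rho> - 1) / R)) (at \<rho>)"
    and "((\<lambda>\<rho>. eta_powr_deriv a (((\<rho> - 1)\<^sup>2 + t) / R) * (2 * (\<rho> - 1) / R)) has_real_derivative
      eta_powr_deriv2 a s * (2 * (\<rho> - 1) / R)\<^sup>2 + eta_powr_deriv a s * (2 / R)) (at \<rho>)"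
proof -
  have s: "((\<rho> - 1)\<^sup>2 + t) / R > 0" using R t \<rho> by (simp add: add_pos_nonneg)
  show "((\<lambda>\<rho>. eta (((\<rho> - 1)\<^sup>2 + t) / R) powr a) has_real_derivative
      eta_powr_deriv a s * (2 * (\<rho> - 1) / R)) (at \<rho>)"
    unfolding s_def using R a by (intro DERIV_comp_radial_arg DERIV_eta_powr s) simp_all
  have "((\<lambda>\<rho>. eta_powr_deriv a (((\<rho> - 1)\<^sup>2 + t) / R)) has_real_derivative
      eta_powr_deriv2 a s * (2 * (\<rho> - 1) / R)) (at \<rho>)"
    unfolding s_def using R by (intro DERIV_comp_radial_arg DERIV_eta_powr_deriv a s) simp
  moreover have "((\<lambda>\<rho>. 2 * (\<rho> - 1) / R) has_real_derivative 2 / R) (at \<rho>)"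
    using R by (auto intro!: derivative_eq_intros)
  ultimately show "((\<lambda>\<rho>. eta_powr_deriv a (((\<rho> - 1)\<^sup>2 + t) / R) * (2 * (\<rho> - 1) / R))
      has_real_derivative eta_powr_deriv2 a s * (2 * (\<rho> - 1) / R)\<^sup>2 + eta_powr_deriv a s * (2 / R)) (at \<rho>)"
    unfolding s_def by (rule DERIV_cong[OF DERIV_mult]) (simp add: power2_eq_square ac_simps)
qed

lemma norm_grad_eta_sR_powr:
  assumes a: "a > 2" and R: "R > 0" and x: "norm x > 1" and t: "t \<ge> 0"
  shows "norm (grad (\<lambda>y. eta (sR R y t) powr a) x)
    = \<bar>eta_powr_deriv a (sR R x t)\<bar> * (2 * (norm x - 1) / R)"
proof -
  have "x \<noteq> 0" using x by auto
  from norm_grad_radial[where g = "\<lambda>\<rho>. eta (((\<rho> - 1)\<^sup>2 + t) / R) powr a"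
      and g' = "\<lambda>\<rho>. eta_powr_deriv a (((\<rho> - 1)\<^sup>2 + t) / R) * (2 * (\<rho> - 1) / R)",
      OF DERIV_radial_eta_powr(1)[OF a R t x] this]
  show ?thesis using x R unfolding sR_def by (simp add: abs_mult)
qed

lemma laplacian_eta_sR_powr:
  assumes a: "a > 2" and R: "R > 0" and x: "norm x > 1" and t: "t \<ge> 0"
  defines "s \<equiv> sR R x t" and "\<rho> \<equiv> norm x"
  shows "laplacian (\<lambda>y. eta (sR R y t) powr a) x
    = eta_powr_deriv2 a s * (2 * (\<rho> - 1) / R)\<^sup>2 + eta_powr_deriv a s * (2 / R)
      + eta_powr_deriv a s * (2 * (\<rho> - 1) / R) / \<rho>"
proof -
  have "laplacian (\<lambda>y. (\<lambda>\<rho>. eta (((\<rho> - 1)\<^sup>2 + t) / R) powr a) (norm y)) x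
      = eta_powr_deriv2 a s * (2 * (\<rho> - 1) / R)\<^sup>2 + eta_powr_deriv a s * (2 / R)
        + eta_powr_deriv a s * (2 * (\<rho> - 1) / R) / \<rho>"
    using laplacian_radial[of "{1<..}" x "\<lambda>\<rho>. eta (((\<rho> - 1)\<^sup>2 + t) / R) powr a"
        "\<lambda>\<rho>. eta_powr_deriv a (((\<rho> - 1)\<^sup>2 + t) / R) * (2 * (\<rho> - 1) / R)"
        "\<lambda>\<rho>. eta_powr_deriv2 a (((\<rho> - 1)\<^sup>2 + t) / R) * (2 * (\<rho> - 1) / R)\<^sup>2
          + eta_powr_deriv a (((\<rho> - 1)\<^sup>2 + t) / R) * (2 / R)",
        OF _ _ _ DERIV_radial_eta_powr(1)[OF a R t]
        DERIV_radial_eta_powr(2)[OF a R t x]] x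
    unfolding s_def \<rho>_def sR_def by auto
  then show ?thesis unfolding sR_def by simp
qed

lemma deriv_t_bounds:
  assumes a: "a > 2" and R: "R > 0" and xt: "(x, t) \<in> PR R"
  defines "E \<equiv> eta_star eta (sR R x t) powr (a - 2)"
  shows "\<bar>deriv (\<lambda>s. eta (sR R x s) powr a) t\<bar> \<le> eta_powr_deriv_bound a / R * E"
    and "\<bar>deriv (deriv (\<lambda>s. eta (sR R x s) powr a)) t\<bar> \<le> eta_powr_deriv2_bound a / R\<^sup>2 * E"
proof -
  have x: "norm x > 1" and t: "t \<ge> 0" using xt by (auto simp: PR_def Omega_def)
  note s = sR_pos_le_one[OF R xt] and derivs = deriv_t_eta_sR_powr[OF a R x t]
  show "\<bar>deriv (\<lambda>s. eta (sR R x s) powr a) t\<bar> \<le> eta_powr_deriv_bound a / R * E"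
    unfolding derivs E_def using abs_eta_powr_deriv_le[OF a s] R by (simp add: field_simps)
  show "\<bar>deriv (deriv (\<lambda>s. eta (sR R x s) powr a)) t\<bar> \<le> eta_powr_deriv2_bound a / R\<^sup>2 * E"
    unfolding derivs E_def using abs_eta_powr_deriv2_le[OF a s] R by (simp add: field_simps)
qed

lemma norm_grad_bound:
  assumes a: "a > 2" and R: "R > 0" and xt: "(x, t) \<in> PR R"
  shows "norm (grad (\<lambda>y. eta (sR R y t) powr a) x)
    \<le> 2 * eta_powr_deriv_bound a / R * norm x * ln (norm x) * eta_star eta (sR R x t) powr (a - 2)"
proof -
  have x: "norm x > 1" and t: "t \<ge> 0" using xt by (auto simp: PR_def Omega_def)
  then have "norm x - 1 \<le> norm x * ln (norm x)" by (intro diff_one_le_mult_ln) linarith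
  have "norm (grad (\<lambda>y. eta (sR R y t) powr a) x)
      = \<bar>eta_powr_deriv a (sR R x t)\<bar> * (2 * (norm x - 1) / R)"
    by (rule norm_grad_eta_sR_powr[OF a R x t])
  also have "\<dots> \<le> (eta_powr_deriv_bound a * eta_star eta (sR R x t) powr (a - 2)) * (2 * (norm x * ln (norm x)) / R)"
    using abs_eta_powr_deriv_le[OF a sR_pos_le_one[OF R xt]] \<open>norm x - 1 \<le> norm x * ln (norm x)\<close> x R
    by (intro mult_mono divide_right_mono) auto
  finally show ?thesis by (simp add: field_simps)
qed

lemma laplacian_bound:
  assumes a: "a > 2" and R: "R > 0" and xt: "(x, t) \<in> PR R"
  defines "E \<equiv> eta_star eta (sR R x t) powr (a - 2)"
  shows "\<bar>laplacian (\<lambda>y. eta (sR R y t) powr a) x\<bar> \<le> 4 * (eta_powr_deriv2_bound a + eta_powr_deriv_bound a) / R * E"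
proof -
  let ?s = "sR R x t" and ?r = "norm x"
  have x: "?r > 1" and t: "t \<ge> 0" and P: "(?r - 1)\<^sup>2 \<le> R"
    using xt by (auto simp: PR_def Omega_def)
  have B1: "\<bar>eta_powr_deriv a ?s\<bar> \<le> eta_powr_deriv_bound a * E" and B2: "\<bar>eta_powr_deriv2 a ?s\<bar> \<le> eta_powr_deriv2_bound a * E"
    unfolding E_def using abs_eta_powr_deriv_le abs_eta_powr_deriv2_le a sR_pos_le_one[OF R xt] by auto
  have "(2 * (?r - 1) / R)\<^sup>2 = 4 / R * ((?r - 1)\<^sup>2 / R)"
    by (simp add: power2_eq_square power_divide field_simps)
  also have "\<dots> \<le> 4 / R"
    using P R by (simp add: divide_le_eq)
  finally have radial: "(2 * (?r - 1) / R)\<^sup>2 \<le> 4 / R" .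
  have ratio: "(?r - 1) / ?r \<le> 1" using x by (simp add: divide_le_eq)
  have "\<bar>laplacian (\<lambda>y. eta (sR R y t) powr a) x\<bar>
      \<le> \<bar>eta_powr_deriv2 a ?s\<bar> * (2 * (?r - 1) / R)\<^sup>2 + \<bar>eta_powr_deriv a ?s\<bar> * (2 / R)
        + \<bar>eta_powr_deriv a ?s\<bar> * (2 / R) * ((?r - 1) / ?r)"
  proof -
    let ?A = "eta_powr_deriv2 a ?s * (2 * (?r - 1) / R)\<^sup>2" and ?B = "eta_powr_deriv a ?s * (2 / R)"
      and ?C = "eta_powr_deriv a ?s * (2 * (?r - 1) / R) / ?r"
    have "\<bar>?A + ?B + ?C\<bar> \<le> \<bar>?A\<bar> + \<bar>?B\<bar> + \<bar>?C\<bar>"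
      by (rule order.trans[OF abs_triangle_ineq add_right_mono[OF abs_triangle_ineq]])
    moreover have "\<bar>?A\<bar> = \<bar>eta_powr_deriv2 a ?s\<bar> * (2 * (?r - 1) / R)\<^sup>2"
      by (simp add: abs_mult)
    moreover have "\<bar>?B\<bar> = \<bar>eta_powr_deriv a ?s\<bar> * (2 / R)"
      using R by (simp add: abs_mult)
    moreover have "\<bar>?C\<bar> = \<bar>eta_powr_deriv a ?s\<bar> * (2 / R) * ((?r - 1) / ?r)"
      using R x by (simp add: abs_mult abs_divide)
    ultimately show ?thesis
      unfolding laplacian_eta_sR_powr[OF a R x t] by linarith
  qed
  also have "\<dots> \<le> (eta_powr_deriv2_bound a * E) * (4 / R) + (eta_powr_deriv_bound a * E) * (2 / R)
      + (eta_powr_deriv_bound a * E) * (2 / R) * 1"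
    using B1 B2 radial ratio R x by (intro add_mono mult_mono) (auto simp: E_def)
  also have "\<dots> = 4 * (eta_powr_deriv2_bound a + eta_powr_deriv_bound a) / R * E"
    by (simp add: field_simps add_divide_distrib)
  finally show ?thesis .
qed

lemma psiR_derivative_bounds:
  assumes p: "p > 1" and R: "R > 0" and xt: "(x, t) \<in> PR R"
  defines "a \<equiv> 2 * pprime p" and "E \<equiv> psiR_star p eta R x t powr (1 / p)"
  shows "\<bar>deriv (\<lambda>s. psiR p eta R x s) t\<bar> \<le> eta_powr_deriv_bound a / R * E"
    and "\<bar>deriv (deriv (\<lambda>s. psiR p eta R x s)) t\<bar> \<le> eta_powr_deriv2_bound a / R\<^sup>2 * E"
    and "norm (grad (\<lambda>y. psiR p eta R y t) x)
      \<le> 2 * eta_powr_deriv_bound a / R * norm x * ln (norm x) * E"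
    and "\<bar>laplacian (\<lambda>y. psiR p eta R y t) x\<bar>
      \<le> 4 * (eta_powr_deriv2_bound a + eta_powr_deriv_bound a) / R * E"
proof -
  have a: "a > 2" unfolding a_def using two_pprime_gt_two[OF p] .
  have psiR_eq: "psiR p eta R = (\<lambda>y s. eta (sR R y s) powr a)"
    by (simp add: fun_eq_iff psiR_def a_def)
  have E: "E = eta_star eta (sR R x t) powr (a - 2)"
    unfolding E_def a_def by (rule psiR_star_powr_inverse[OF p])
  show "\<bar>deriv (\<lambda>s. psiR p eta R x s) t\<bar> \<le> eta_powr_deriv_bound a / R * E"
    and "\<bar>deriv (deriv (\<lambda>s. psiR p eta R x s)) t\<bar> \<le> eta_powr_deriv2_bound a / R\<^sup>2 * E"
    and "norm (grad (\<lambda>y. psiR p eta R y t) x)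
      \<le> 2 * eta_powr_deriv_bound a / R * norm x * ln (norm x) * E"
    and "\<bar>laplacian (\<lambda>y. psiR p eta R y t) x\<bar>
      \<le> 4 * (eta_powr_deriv2_bound a + eta_powr_deriv_bound a) / R * E"
    unfolding psiR_eq E
    using deriv_t_bounds[OF a R xt] norm_grad_bound[OF a R xt] laplacian_bound[OF a R xt]
    by simp_all
qed

end

theorem lemma2p2:
  fixes p :: real and eta :: "real \<Rightarrow> real"
  assumes "p > 1" and "cutoff eta"
  shows "\<exists>C1 C2 C3 C4 :: real. C1 > 0 \<and> C2 > 0 \<and> C3 > 0 \<and> C4 > 0 \<and>
    (\<forall>R > 0.
      (\<forall>x t. (x, t) \<in> PR (R / 2) \<longrightarrow> psiR p eta R x t = 1) \<and>
      (\<forall>x t. x \<in> Omega \<and> t \<ge> 0 \<and> (x, t) \<notin> PR R \<longrightarrow> psiR p eta R x t = 0) \<and>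
      (\<forall>(x, t) \<in> PR R.
         \<bar>deriv (\<lambda>s. psiR p eta R x s) t\<bar>
           \<le> C1 / R * (psiR_star p eta R x t) powr (1 / p) \<and>
         \<bar>deriv (deriv (\<lambda>s. psiR p eta R x s)) t\<bar>
           \<le> C2 / R\<^sup>2 * (psiR_star p eta R x t) powr (1 / p) \<and>
         norm (grad (\<lambda>y. psiR p eta R y t) x)
           \<le> C3 / R * norm x * ln (norm x) * (psiR_star p eta R x t) powr (1 / p) \<and>
         \<bar>laplacian (\<lambda>y. psiR p eta R y t) x\<bar>
           \<le> C4 / R * (psiR_star p eta R x t) powr (1 / p)))"
proof -
  obtain f1 f2 M1 M2 where "cutoff_profile eta f1 f2 M1 M2"
    using cutoff_imp_cutoff_profile[OF assms(2)] by blast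
  then interpret cutoff_profile eta f1 f2 M1 M2 .
  let ?a = "2 * pprime p"
  have "eta_powr_deriv_bound ?a > 0" "eta_powr_deriv2_bound ?a > 0"
    using eta_powr_deriv_bounds_pos two_pprime_gt_two[OF assms(1)] by auto
  then show ?thesis
    using psiR_derivative_bounds[OF assms(1)] psiR_eq_one[OF assms(2)] psiR_eq_zero[OF assms(2)]
    by (intro exI[of _ "eta_powr_deriv_bound ?a"] exI[of _ "eta_powr_deriv2_bound ?a"]
        exI[of _ "2 * eta_powr_deriv_bound ?a"]
        exI[of _ "4 * (eta_powr_deriv2_bound ?a + eta_powr_deriv_bound ?a)"]) auto
qed

end
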